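(* Let $V$ be any vector space over a field $\mathbf{k}$ of characteristic zero. The assignment sending a twisted Poisson structure $\{\,,\}$ on $TV$ to the map $r\in\operatorname{End}(V\otimes V)$, $r(v\otimes w):=\{v,w\}$ for $v,w\in V$, is a bijection between twisted Poisson structures on $TV$ and elements $r\in\operatorname{End}(V\otimes V)$ that are skew, $r=-r^{21}$, and satisfy the classical Yang–Baxter equation $$[r^{12},r^{13}]-[r^{23},r^{12}]+[r^{13},r^{23}]=0\quad\text{in }\operatorname{End}(V^{\otimes 3}).$$
   Context: $TV=\bigoplus_{m\ge0}V^{\otimes m}$ is the tensor algebra with multiplication $\otimes$; for $x\in V^{\otimes m}$ write $|x|=m$, and $S_m$ acts on $V^{\otimes m}$ by permuting tensor factors. Block permutations: for $a,b,c\ge0$, $(21)^{a,b}$ is the linear map of $V^{\otimes(a+b)}$ with $x\otimes y\mapsto y\otimes x$ ($x\in V^{\otimes a},y\in V^{\otimes b}$); $(231)^{a,b,c}$, $(312)^{a,b,c}$, $(213)^{a,b,c}$ are the linear maps of $V^{\otimes(a+b+c)}$ with $x\otimes y\otimes z\mapsto z\otimes x\otimes y$, $x\otimes y\otimes z\mapsto y\otimes z\otimes x$, $x\otimes y\otimes z\mapsto y\otimes x\otimes z$ respectively ($x\in V^{\otimes a},y\in V^{\otimes b},z\in V^{\otimes c}$). A twisted Poisson structure on $TV$ is a bilinear map $\{\,,\}:TV\otimes TV\to TV$ with $\{V^{\otimes m},V^{\otimes n}\}\subset V^{\otimes(m+n)}$ such that for all homogeneous $u,v,w$: (skew-symmetry)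 $\{w,v\}=-(21)^{|v|,|w|}\{v,w\}$; (Jacobi) $\{u,\{v,w\}\}+(231)^{|v|,|w|,|u|}\{v,\{w,u\}\}+(312)^{|w|,|u|,|v|}\{w,\{u,v\}\}=0$; (Leibniz) $\{u\otimes v,w\}=u\otimes\{v,w\}+(213)^{|v|,|u|,|w|}(v\otimes\{u,w\})$. For $r\in\operatorname{End}(V\otimes V)$, $r^{ij}\in\operatorname{End}(V^{\otimes 3})$ denotes $r$ acting on the $i$-th and $j$-th tensor factors, and $r^{21}=PrP$ where $P(v\otimes w)=w\otimes v$. *)

theory Defs
  imports Main "HOL-Library.Poly_Mapping"
begin

text \<open>V is the k-vector space with basis indexed by the type 'b
(every vector space has a basis). Then V^{\<otimes>m} has basis the words of
length m over 'b, and TV is the space of finitely supported functions on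
words: type tv below.\<close>

type_synonym ('b, 'k) tv = "'b list \<Rightarrow>\<^sub>0 'k"

definition smult :: "'k::field \<Rightarrow> ('b, 'k) tv \<Rightarrow> ('b, 'k) tv" where
  "smult c p = Poly_Mapping.map (\<lambda>x. c * x) p"

definition tensor :: "('b, 'k::field) tv \<Rightarrow> ('b, 'k) tv \<Rightarrow> ('b, 'k) tv" where
  "tensor p q = (\<Sum>u\<in>Poly_Mapping.keys p. \<Sum>v\<in>Poly_Mapping.keys q. Poly_Mapping.single (u @ v) (Poly_Mapping.lookup p u * Poly_Mapping.lookup q v))"

definition homog :: "nat \<Rightarrow> ('b, 'k::field) tv \<Rightarrow> bool" where
  "homog m p \<longleftrightarrow> (\<forall>w\<in>Poly_Mapping.keys p. length w = m)"

definition proj :: "nat \<Rightarrow> ('b, 'k::field) tv \<Rightarrow> ('b, 'k) tv" where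
  "proj m p = (\<Sum>w\<in>{w\<in>Poly_Mapping.keys p. length w = m}. Poly_Mapping.single w (Poly_Mapping.lookup p w))"

text \<open>Block permutations: given on basis words; the value at an output word w
is the coefficient of its preimage. They act as the identity on words of
other lengths (irrelevant: they are only applied in the right degree).\<close>

definition key21 :: "nat \<Rightarrow> nat \<Rightarrow> 'b list \<Rightarrow> 'b list" where
  "key21 a b w = (if length w = a + b then drop b w @ take b w else w)"

definition key231 :: "nat \<Rightarrow> nat \<Rightarrow> nat \<Rightarrow> 'b list \<Rightarrow> 'b list" where
  "key231 a b c w = (if length w = a + b + c
     then take a (drop c w) @ drop (c + a) w @ take c w else w)"

definition key312 :: "nat \<Rightarrow> nat \<Rightarrow> nat \<Rightarrow> 'b list \<Rightarrow> 'b list" where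
  "key312 a b c w = (if length w = a + b + c
     then drop (b + c) w @ take b w @ take c (drop b w) else w)"

definition key213 :: "nat \<Rightarrow> nat \<Rightarrow> nat \<Rightarrow> 'b list \<Rightarrow> 'b list" where
  "key213 a b c w = (if length w = a + b + c
     then take a (drop b w) @ take b w @ drop (b + a) w else w)"

text \<open>(21)^{a,b}: x \<otimes> y \<mapsto> y \<otimes> x\<close>
definition perm21 :: "nat \<Rightarrow> nat \<Rightarrow> ('b, 'k::field) tv \<Rightarrow> ('b, 'k) tv" where
  "perm21 a b p = Poly_Mapping.map_key (key21 a b) p"

text \<open>(231)^{a,b,c}: x \<otimes> y \<otimes> z \<mapsto> z \<otimes> x \<otimes> y\<close>
definition perm231 :: "nat \<Rightarrow> nat \<Rightarrow> nat \<Rightarrow> ('b, 'k::field) tv \<Rightarrow> ('b, 'k) tv" where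
  "perm231 a b c p = Poly_Mapping.map_key (key231 a b c) p"

text \<open>(312)^{a,b,c}: x \<otimes> y \<otimes> z \<mapsto> y \<otimes> z \<otimes> x\<close>
definition perm312 :: "nat \<Rightarrow> nat \<Rightarrow> nat \<Rightarrow> ('b, 'k::field) tv \<Rightarrow> ('b, 'k) tv" where
  "perm312 a b c p = Poly_Mapping.map_key (key312 a b c) p"

text \<open>(213)^{a,b,c}: x \<otimes> y \<otimes> z \<mapsto> y \<otimes> x \<otimes> z\<close>
definition perm213 :: "nat \<Rightarrow> nat \<Rightarrow> nat \<Rightarrow> ('b, 'k::field) tv \<Rightarrow> ('b, 'k) tv" where
  "perm213 a b c p = Poly_Mapping.map_key (key213 a b c) p"

definition twisted_poisson :: "(('b, 'k::field) tv \<Rightarrow> ('b, 'k) tv \<Rightarrow> ('b, 'k) tv) \<Rightarrow> bool" where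
  "twisted_poisson br \<longleftrightarrow>
     \<comment> \<open>bilinear\<close>
     (\<forall>p q s. br (p + q) s = br p s + br q s) \<and>
     (\<forall>p q s. br s (p + q) = br s p + br s q) \<and>
     (\<forall>c p q. br (smult c p) q = smult c (br p q)) \<and>
     (\<forall>c p q. br p (smult c q) = smult c (br p q)) \<and>
     \<comment> \<open>graded: {V^m, V^n} \<subseteq> V^(m+n)\<close>
     (\<forall>m n p q. homog m p \<longrightarrow> homog n q \<longrightarrow> homog (m + n) (br p q)) \<and>
     \<comment> \<open>skew-symmetry\<close>
     (\<forall>m n v w. homog m v \<longrightarrow> homog n w \<longrightarrow> br w v = - perm21 m n (br v w)) \<and>
     \<comment> \<open>Jacobi, |u| = l, |v| = m, |w| = n\<close>
     (\<forall>l m n u v w. homog l u \<longrightarrow> homog m v \<longrightarrow> homog n w \<longrightarrow>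
        br u (br v w) + perm231 m n l (br v (br w u)) + perm312 n l m (br w (br u v)) = 0) \<and>
     \<comment> \<open>Leibniz, |u| = l, |v| = m, |w| = n\<close>
     (\<forall>l m n u v w. homog l u \<longrightarrow> homog m v \<longrightarrow> homog n w \<longrightarrow>
        br (tensor u v) w = tensor u (br v w) + perm213 m l n (tensor v (br u w)))"

text \<open>End(V \<otimes> V), with V \<otimes> V = V^{\<otimes>2} \<subseteq> TV: linear maps of TV that
factor through the projection to V^{\<otimes>2} and take values in V^{\<otimes>2}
(these correspond bijectively to linear endomorphisms of V \<otimes> V).\<close>
definition EndVV :: "(('b, 'k::field) tv \<Rightarrow> ('b, 'k) tv) set" where
  "EndVV = {R. (\<forall>p q. R (p + q) = R p + R q) \<and> (\<forall>c p. R (smult c p) = smult c (R p)) \<and>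
               (\<forall>p. R p = R (proj 2 p)) \<and> (\<forall>p. homog 2 (R p))}"

definition flipP :: "('b, 'k::field) tv \<Rightarrow> ('b, 'k) tv" where
  "flipP = perm21 1 1"

definition r21 :: "(('b, 'k::field) tv \<Rightarrow> ('b, 'k) tv) \<Rightarrow> ('b, 'k) tv \<Rightarrow> ('b, 'k) tv" where
  "r21 R p = flipP (R (flipP p))"

definition skew_r :: "(('b, 'k::field) tv \<Rightarrow> ('b, 'k) tv) \<Rightarrow> bool" where
  "skew_r R \<longleftrightarrow> R = (\<lambda>p. - r21 R p)"

definition r12 :: "(('b, 'k::field) tv \<Rightarrow> ('b, 'k) tv) \<Rightarrow> ('b, 'k) tv \<Rightarrow> ('b, 'k) tv" where
  "r12 R x = (\<Sum>w\<in>{w\<in>Poly_Mapping.keys x. length w = 3}.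
      smult (Poly_Mapping.lookup x w) (tensor (R (Poly_Mapping.single [w!0, w!1] 1)) (Poly_Mapping.single [w!2] 1)))"

definition r23 :: "(('b, 'k::field) tv \<Rightarrow> ('b, 'k) tv) \<Rightarrow> ('b, 'k) tv \<Rightarrow> ('b, 'k) tv" where
  "r23 R x = (\<Sum>w\<in>{w\<in>Poly_Mapping.keys x. length w = 3}.
      smult (Poly_Mapping.lookup x w) (tensor (Poly_Mapping.single [w!0] 1) (R (Poly_Mapping.single [w!1, w!2] 1))))"

definition key_swap23 :: "'b list \<Rightarrow> 'b list" where
  "key_swap23 w = (if length w = 3 then [w!0, w!2, w!1] else w)"

definition P23 :: "('b, 'k::field) tv \<Rightarrow> ('b, 'k) tv" where
  "P23 p = Poly_Mapping.map_key key_swap23 p"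

definition r13 :: "(('b, 'k::field) tv \<Rightarrow> ('b, 'k) tv) \<Rightarrow> ('b, 'k) tv \<Rightarrow> ('b, 'k) tv" where
  "r13 R x = P23 (r12 R (P23 x))"

definition commut :: "(('b, 'k::field) tv \<Rightarrow> ('b, 'k) tv) \<Rightarrow> (('b, 'k) tv \<Rightarrow> ('b, 'k) tv)
                      \<Rightarrow> ('b, 'k) tv \<Rightarrow> ('b, 'k) tv" where
  "commut A B x = A (B x) - B (A x)"

definition CYBE :: "(('b, 'k::field) tv \<Rightarrow> ('b, 'k) tv) \<Rightarrow> bool" where
  "CYBE R \<longleftrightarrow> (\<forall>x. homog 3 x \<longrightarrow>
     commut (r12 R) (r13 R) x - commut (r23 R) (r12 R) x + commut (r13 R) (r23 R) x = 0)"

definition assoc_r :: "(('b, 'k::field) tv \<Rightarrow> ('b, 'k) tv \<Rightarrow> ('b, 'k) tv) \<Rightarrow> ('b, 'k) tv \<Rightarrow> ('b, 'k) tv" where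
  "assoc_r br p = (\<Sum>w\<in>{w\<in>Poly_Mapping.keys p. length w = 2}.
      smult (Poly_Mapping.lookup p w) (br (Poly_Mapping.single [w!0] 1) (Poly_Mapping.single [w!1] 1)))"

end

theory Submission
  imports Defs
begin

text \<open>By the Leibniz rule and skew-symmetry, a twisted Poisson bracket is determined by its values
  r(a \<otimes> b) = {a, b} on letters: the bracket of two words x, y is the sum, over all pairs of
  positions, of the word x y with the letters x!i, y!j replaced by r(x!i \<otimes> y!j). Conversely,
  for every skew r this formula defines a graded bilinear bracket that is skew-symmetric and
  satisfies the Leibniz rule. In the Jacobiator of three words, the terms in which the two
  brackets act on disjoint pairs of letters cancel in the cyclic sum, and the remaining terms,
  in which the two brackets share a letter, add up to the classical Yang-Baxter expression
  applied at the three letters involved. So the Jacobi identity holds exactly when r satisfies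
  the CYBE.\<close>

abbreviation lookup where "lookup \<equiv> Poly_Mapping.lookup"
abbreviation keys where "keys \<equiv> Poly_Mapping.keys"
abbreviation single where "single \<equiv> Poly_Mapping.single"

abbreviation wvec :: "'b list \<Rightarrow> ('b, 'k::field) tv" where
  "wvec w \<equiv> single w 1"

lemma sum_lessThan_add: "(\<Sum>i<(a::nat) + b. f i) = (\<Sum>i<a. f i) + (\<Sum>i<b. f (a + i))"
  by (induct b) (simp_all add: add.assoc)

lemma sum_split_off: "(j::nat) < n \<Longrightarrow> (\<Sum>p<n. f p) = f j + (\<Sum>p<n. if p = j then 0 else f p)"
  by (simp add: sum.If_cases Int_absorb1 sum.remove[of "{..<n}" j] Diff_eq)

lemma sum_rotate3: "(\<Sum>b\<in>B. \<Sum>c\<in>C. \<Sum>d\<in>D. f b c d) = (\<Sum>d\<in>D. \<Sum>b\<in>B. \<Sum>c\<in>C. f b c d)"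
proof -
  have "(\<Sum>b\<in>B. \<Sum>c\<in>C. \<Sum>d\<in>D. f b c d) = (\<Sum>b\<in>B. \<Sum>d\<in>D. \<Sum>c\<in>C. f b c d)"
    by (rule sum.cong[OF refl], rule sum.swap)
  also have "\<dots> = (\<Sum>d\<in>D. \<Sum>b\<in>B. \<Sum>c\<in>C. f b c d)"
    by (rule sum.swap)
  finally show ?thesis .
qed

lemma sum_swap_first_last:
  "(\<Sum>a\<in>A. \<Sum>b\<in>B. \<Sum>c\<in>A. f a b c) = (\<Sum>a\<in>A. \<Sum>b\<in>B. \<Sum>c\<in>A. f c b a)"
proof -
  have "(\<Sum>a\<in>A. \<Sum>b\<in>B. \<Sum>c\<in>A. f a b c) = (\<Sum>c\<in>A. \<Sum>a\<in>A. \<Sum>b\<in>B. f a b c)"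
    by (rule sum_rotate3)
  also have "\<dots> = (\<Sum>c\<in>A. \<Sum>b\<in>B. \<Sum>a\<in>A. f a b c)"
    by (rule sum.cong[OF refl], rule sum.swap)
  finally show ?thesis .
qed

section \<open>Linear extension from basis words\<close>

lemma lookup_smult [simp]: "lookup (smult c p) w = c * lookup p w"
  by (simp add: smult_def Poly_Mapping.map.rep_eq when_def)

lemma smult_zero [simp]: "smult c 0 = 0" "smult 0 p = 0"
  by (rule poly_mapping_eqI, simp)+

lemma smult_add [simp]: "smult c (p + q) = smult c p + smult c q"
  by (rule poly_mapping_eqI) (simp add: lookup_add algebra_simps)

lemma smult_neg [simp]: "smult c (- p) = - smult c p"
  by (rule poly_mapping_eqI) simp

lemma smult_diff [simp]: "smult c (p - q) = smult c p - smult c q"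
  by (rule poly_mapping_eqI) (simp add: lookup_minus algebra_simps)

lemma smult_single [simp]: "smult c (single w d) = single w (c * d)"
  by (rule poly_mapping_eqI) (simp add: lookup_single when_def)

lemma smult_one [simp]: "smult 1 p = p"
  by (rule poly_mapping_eqI) simp

lemma smult_smult [simp]: "smult a (smult b p) = smult (a * b) p"
  by (rule poly_mapping_eqI) simp

lemma smult_add_left: "smult (a + b) p = smult a p + smult b p"
  by (rule poly_mapping_eqI) (simp add: lookup_add algebra_simps)

lemma smult_sum: "smult c (sum f I) = (\<Sum>i\<in>I. smult c (f i))"
  by (rule poly_mapping_eqI) (simp add: lookup_sum sum_distrib_left)

definition lin_ext :: "('b list \<Rightarrow> ('c, 'k::field) tv) \<Rightarrow> ('b, 'k) tv \<Rightarrow> ('c, 'k) tv" where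
  "lin_ext F p = (\<Sum>w\<in>keys p. smult (lookup p w) (F w))"

lemma lin_ext_superset:
  assumes "finite S" "keys p \<subseteq> S"
  shows "lin_ext F p = (\<Sum>w\<in>S. smult (lookup p w) (F w))"
  unfolding lin_ext_def
  by (rule sum.mono_neutral_left) (use assms in \<open>auto simp: in_keys_iff\<close>)

lemma lin_ext_add [simp]: "lin_ext F (p + q) = lin_ext F p + lin_ext F q"
proof -
  have "lin_ext F (p + q) = (\<Sum>w\<in>keys p \<union> keys q. smult (lookup (p + q) w) (F w))"
    by (rule lin_ext_superset) (auto simp: keys_add)
  also have "\<dots> = (\<Sum>w\<in>keys p \<union> keys q. smult (lookup p w) (F w))
                 + (\<Sum>w\<in>keys p \<union> keys q. smult (lookup q w) (F w))"
    by (simp add: lookup_add smult_add_left sum.distrib)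
  also have "\<dots> = lin_ext F p + lin_ext F q"
    by (simp add: lin_ext_superset[symmetric])
  finally show ?thesis .
qed

lemma lin_ext_zero [simp]: "lin_ext F 0 = 0"
  by (simp add: lin_ext_def)

lemma lin_ext_single [simp]: "lin_ext F (single w c) = smult c (F w)"
  by (simp add: lin_ext_def)

lemma lin_ext_smult [simp]: "lin_ext F (smult c p) = smult c (lin_ext F p)"
proof -
  have "lin_ext F (smult c p) = (\<Sum>w\<in>keys p. smult (lookup (smult c p) w) (F w))"
    by (rule lin_ext_superset) (auto simp: in_keys_iff)
  then show ?thesis
    by (simp add: lin_ext_def smult_sum)
qed

lemma lin_ext_neg [simp]: "lin_ext F (- p) = - lin_ext F p"
  using lin_ext_add[of F p "- p"] by (simp add: eq_neg_iff_add_eq_0 add.commute)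

lemma lin_ext_sum: "lin_ext F (sum f I) = (\<Sum>i\<in>I. lin_ext F (f i))"
  by (induction I rule: infinite_finite_induct) auto

lemma lin_ext_fun_add: "lin_ext (\<lambda>w. F w + G w) p = lin_ext F p + lin_ext G p"
  by (simp add: lin_ext_def sum.distrib)

lemma lin_ext_fun_zero [simp]: "lin_ext (\<lambda>w. 0) p = 0"
  by (simp add: lin_ext_def)

lemma lin_ext_fun_neg: "lin_ext (\<lambda>w. - F w) p = - lin_ext F p"
  by (simp add: lin_ext_def sum_negf)

lemma lin_ext_fun_sum: "lin_ext (\<lambda>w. \<Sum>i\<in>I. F i w) p = (\<Sum>i\<in>I. lin_ext (F i) p)"
  by (simp add: lin_ext_def smult_sum sum.swap[of _ I])

lemma lin_ext_fun_smult: "lin_ext (\<lambda>w. smult c (F w)) p = smult c (lin_ext F p)"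
  by (simp add: lin_ext_def smult_sum mult.commute)

lemma lin_ext_cong: "(\<And>w. w \<in> keys p \<Longrightarrow> F w = G w) \<Longrightarrow> lin_ext F p = lin_ext G p"
  by (simp add: lin_ext_def)

lemma lin_ext_eq_0: "(\<And>w. w \<in> keys p \<Longrightarrow> F w = 0) \<Longrightarrow> lin_ext F p = 0"
  by (simp add: lin_ext_def)

lemma lin_ext_swap:
  "lin_ext (\<lambda>w. lin_ext (\<lambda>v. F w v) q) p = lin_ext (\<lambda>v. lin_ext (\<lambda>w. F w v) p) q"
  by (simp add: lin_ext_def smult_sum sum.swap[of _ "keys p"] mult.commute)

lemma lin_ext_wvec [simp]: "lin_ext wvec p = p"
  by (rule poly_mapping_eqI) (simp add: lin_ext_def lookup_sum lookup_single when_def in_keys_iff)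

definition tv_linear :: "(('b, 'k::field) tv \<Rightarrow> ('c, 'k) tv) \<Rightarrow> bool" where
  "tv_linear h \<longleftrightarrow> (\<forall>p q. h (p + q) = h p + h q) \<and> (\<forall>c p. h (smult c p) = smult c (h p))"

lemma tv_linear_add: "tv_linear h \<Longrightarrow> h (p + q) = h p + h q"
  by (simp add: tv_linear_def)

lemma tv_linear_smult: "tv_linear h \<Longrightarrow> h (smult c p) = smult c (h p)"
  by (simp add: tv_linear_def)

lemma tv_linear_zero: "tv_linear h \<Longrightarrow> h 0 = 0"
  using tv_linear_add[of h 0 0] by simp

lemma tv_linear_neg: "tv_linear h \<Longrightarrow> h (- p) = - h p"
  using tv_linear_add[of h p "- p"] tv_linear_zero[of h] by (simp add: eq_neg_iff_add_eq_0 add.commute)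

lemma tv_linear_diff: "tv_linear h \<Longrightarrow> h (p - q) = h p - h q"
  using tv_linear_add[of h p "- q"] tv_linear_neg[of h q] by simp

lemma tv_linear_sum: "tv_linear h \<Longrightarrow> h (sum f I) = (\<Sum>i\<in>I. h (f i))"
  by (induction I rule: infinite_finite_induct) (auto simp: tv_linear_zero tv_linear_def)

lemma tv_linear_lin_ext: "tv_linear h \<Longrightarrow> h (lin_ext F p) = lin_ext (\<lambda>w. h (F w)) p"
  unfolding lin_ext_def by (simp add: tv_linear_sum) (simp add: tv_linear_def)

lemma lin_ext_is_linear: "tv_linear (lin_ext F)"
  by (simp add: tv_linear_def)

lemma lin_ext_lin_ext: "lin_ext G (lin_ext F p) = lin_ext (\<lambda>x. lin_ext G (F x)) p"
  by (rule tv_linear_lin_ext[OF lin_ext_is_linear])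

lemma lin_ext_expand: "tv_linear h \<Longrightarrow> h p = lin_ext (\<lambda>w. h (wvec w)) p"
  using tv_linear_lin_ext[of h wvec p] by simp

lemma lin_ext_expand3:
  assumes "\<And>v w. tv_linear (\<lambda>u. T u v w)" "\<And>u w. tv_linear (\<lambda>v. T u v w)" "\<And>u v. tv_linear (T u v)"
  shows "T u v w = lin_ext (\<lambda>x. lin_ext (\<lambda>y. lin_ext (\<lambda>z. T (wvec x) (wvec y) (wvec z)) w) v) u"
  by (subst lin_ext_expand[OF assms(1)], subst lin_ext_expand[OF assms(2)],
      subst lin_ext_expand[OF assms(3)]) (rule refl)

lemma lookup_map_key: "inj f \<Longrightarrow> lookup (Poly_Mapping.map_key f p) w = lookup p (f w)"
proof -
  assume [transfer_rule]: "inj f"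
  show ?thesis by transfer simp
qed

lemma tv_linear_map_key: "inj f \<Longrightarrow> tv_linear (Poly_Mapping.map_key f)"
  unfolding tv_linear_def smult_def using map_key_plus map_key_map by blast

lemma map_key_single_eq: "inj f \<Longrightarrow> f k = w \<Longrightarrow> Poly_Mapping.map_key f (single w c) = single k c"
  by auto

lemma lin_ext_map_key_involution:
  assumes inv: "\<And>w. f (f w) = w"
  shows "lin_ext F (Poly_Mapping.map_key f p) = lin_ext (\<lambda>w. F (f w)) p"
proof -
  have inj: "inj f" by (metis inv injI)
  have keys: "keys (Poly_Mapping.map_key f p) = f ` keys p"
    using keys_map_key[OF inj] inv by (auto simp: image_def) metis
  have "lin_ext F (Poly_Mapping.map_key f p) = (\<Sum>w\<in>f ` keys p. smult (lookup p (f w)) (F w))"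
    unfolding lin_ext_def keys by (simp add: lookup_map_key[OF inj])
  also have "\<dots> = (\<Sum>w\<in>keys p. smult (lookup p w) (F (f w)))"
    by (subst sum.reindex) (auto intro: inj_on_subset[OF inj] simp: inv)
  finally show ?thesis by (simp add: lin_ext_def)
qed

lemma inj_rotate:
  assumes "c \<le> n"
  shows "inj (\<lambda>w::'a list. if length w = n then drop c w @ take c w else w)"
proof (rule injI)
  fix w1 w2 :: "'a list"
  assume eq: "(if length w1 = n then drop c w1 @ take c w1 else w1)
            = (if length w2 = n then drop c w2 @ take c w2 else w2)"
  have l: "length (if length w = n then drop c w @ take c w else w) = length w" for w :: "'a list"
    using assms by auto
  from l[of w1] l[of w2] eq have len: "length w1 = length w2" by metis
  show "w1 = w2"
  proof (cases "length w1 = n")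
    case True
    with len eq have "drop c w1 @ take c w1 = drop c w2 @ take c w2" by simp
    moreover have "length (drop c w1) = length (drop c w2)" using len by simp
    ultimately have "drop c w1 = drop c w2" "take c w1 = take c w2" by auto
    then show ?thesis by (metis append_take_drop_id)
  qed (use len eq in simp)
qed

lemma key21_rotate: "key21 a b = (\<lambda>w. if length w = a + b then drop b w @ take b w else w)"
  by (simp add: key21_def fun_eq_iff)

lemma key231_rotate: "key231 a b c = (\<lambda>w. if length w = a + b + c then drop c w @ take c w else w)"
  by (auto simp: key231_def fun_eq_iff add.commute[of c a] simp flip: drop_drop)

lemma key312_rotate:
  "key312 a b c = (\<lambda>w. if length w = a + b + c then drop (b + c) w @ take (b + c) w else w)"
  by (simp add: key312_def take_add fun_eq_iff)

lemma length2_cases: "length w = 2 \<Longrightarrow> w = [w!0, w!1]"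
  by (auto simp: numeral_2_eq_2 length_Suc_conv)

lemma length3_cases: "length w = 3 \<Longrightarrow> w = [w!0, w!1, w!2]"
  by (auto simp: numeral_3_eq_3 length_Suc_conv)

lemma split_length3:
  assumes "length w = a + b + c"
  obtains x y z where "w = x @ y @ z" "length x = a" "length y = b" "length z = c"
proof
  show "w = take a w @ take b (drop a w) @ drop (a + b) w"
    by (metis append.assoc append_take_drop_id drop_drop take_add add.commute)
qed (use assms in auto)

lemma key213_involution: "key213 b a c (key213 a b c w) = w"
proof (cases "length w = a + b + c")
  case True
  then obtain y x z where "w = y @ x @ z" "length y = b" "length x = a" "length z = c"
    by (metis add.commute split_length3)
  then show ?thesis by (simp add: key213_def)
qed (simp add: key213_def)

lemma key_swap23_involution: "key_swap23 (key_swap23 w) = w"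
  by (cases "length w = 3") (auto simp: key_swap23_def dest: length3_cases)

lemma key21_involution: "key21 b a (key21 a b w) = w"
  by (cases "length w = a + b") (auto simp: key21_def)

lemma inj_keys:
  "inj (key21 a b)" "inj (key231 a b c)" "inj (key312 a b c)" "inj (key213 a b c)" "inj key_swap23"
  unfolding key21_rotate key231_rotate key312_rotate
  by (auto intro: inj_rotate inj_on_inverseI key213_involution key_swap23_involution)

lemma tv_linear_perms:
  "tv_linear (perm21 a b)" "tv_linear (perm231 a b c)" "tv_linear (perm312 a b c)"
  "tv_linear (perm213 a b c)" "tv_linear P23"
  unfolding perm21_def perm231_def perm312_def perm213_def P23_def
  by (simp_all add: tv_linear_map_key inj_keys)

lemmas perms_add = tv_linear_add[OF tv_linear_perms(1)] tv_linear_add[OF tv_linear_perms(2)]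
  tv_linear_add[OF tv_linear_perms(3)] tv_linear_add[OF tv_linear_perms(4)]
lemmas perms_smult = tv_linear_smult[OF tv_linear_perms(1)] tv_linear_smult[OF tv_linear_perms(2)]
  tv_linear_smult[OF tv_linear_perms(3)] tv_linear_smult[OF tv_linear_perms(4)]

lemma perm21_single:
  "length x = a \<Longrightarrow> length y = b \<Longrightarrow> perm21 a b (single (x @ y) c) = single (y @ x) c"
  unfolding perm21_def by (rule map_key_single_eq) (auto simp: inj_keys key21_def)

lemma perm231_single: "length x = a \<Longrightarrow> length y = b \<Longrightarrow> length z = c \<Longrightarrow>
   perm231 a b c (single (x @ y @ z) d) = single (z @ x @ y) d"
  unfolding perm231_def by (rule map_key_single_eq[OF inj_keys(2)]) (simp add: key231_rotate)

lemma perm312_single: "length x = a \<Longrightarrow> length y = b \<Longrightarrow> length z = c \<Longrightarrow>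
   perm312 a b c (single (x @ y @ z) d) = single (y @ z @ x) d"
  unfolding perm312_def by (rule map_key_single_eq[OF inj_keys(3)]) (simp add: key312_rotate)

lemma perm213_single: "length x = a \<Longrightarrow> length y = b \<Longrightarrow> length z = c \<Longrightarrow>
   perm213 a b c (single (x @ y @ z) d) = single (y @ x @ z) d"
  unfolding perm213_def by (rule map_key_single_eq) (auto simp: inj_keys key213_def)

lemma P23_single: "P23 (single [a, b, c] d) = single [a, c, b] d"
  unfolding P23_def by (rule map_key_single_eq) (auto simp: inj_keys key_swap23_def)

lemma key21_1_1: "length w = 2 \<Longrightarrow> key21 1 1 w = [w!1, w!0]"
  by (subst (1 2) length2_cases) (simp_all add: key21_def)

lemma perm21_involution: "perm21 b a (perm21 a b p) = p"
  unfolding perm21_def by (simp add: map_key_compose inj_keys comp_def key21_involution map_key_id)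

lemma perm213_0_0: "perm213 0 0 n p = p"
proof -
  have id: "key213 0 0 n = (\<lambda>w. w)" by (simp add: key213_def fun_eq_iff)
  show ?thesis unfolding perm213_def id by (rule map_key_id)
qed

lemma homog_zero [simp]: "homog n 0"
  by (simp add: homog_def)

lemma homog_add: "homog n p \<Longrightarrow> homog n q \<Longrightarrow> homog n (p + q)"
  using keys_add[of p q] unfolding homog_def by blast

lemma homog_neg: "homog n p \<Longrightarrow> homog n (- p)"
  unfolding homog_def by (auto simp: in_keys_iff)

lemma homog_smult: "homog n p \<Longrightarrow> homog n (smult c p)"
  unfolding homog_def by (auto simp: in_keys_iff)

lemma homog_diff: "homog n p \<Longrightarrow> homog n q \<Longrightarrow> homog n (p - q)"
  unfolding diff_conv_add_uminus by (intro homog_add homog_neg)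

lemma homog_sum: "(\<And>i. i \<in> I \<Longrightarrow> homog n (f i)) \<Longrightarrow> homog n (sum f I)"
  by (induction I rule: infinite_finite_induct) (auto intro: homog_add)

lemma homog_single: "length w = n \<Longrightarrow> homog n (single w c)"
  by (simp add: homog_def)

lemma homog_lin_ext: "(\<And>w. w \<in> keys p \<Longrightarrow> homog n (F w)) \<Longrightarrow> homog n (lin_ext F p)"
  unfolding lin_ext_def by (auto intro!: homog_sum homog_smult)

lemma homog_P23: "homog n p \<Longrightarrow> homog n (P23 p)"
  unfolding homog_def P23_def
  by (auto simp: keys_map_key[OF inj_keys(5)] key_swap23_def split: if_splits)

lemma homog_keys: "homog n p \<Longrightarrow> w \<in> keys p \<Longrightarrow> length w = n"
  by (simp add: homog_def)

lemma lin_ext_homog2: "homog 2 q \<Longrightarrow> lin_ext F q = lin_ext (\<lambda>v. F [v!0, v!1]) q"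
  by (rule lin_ext_cong) (metis homog_keys length2_cases)

lemma lin_ext_homog3: "homog 3 q \<Longrightarrow> lin_ext F q = lin_ext (\<lambda>v. F [v!0, v!1, v!2]) q"
  by (rule lin_ext_cong) (metis homog_keys length3_cases)

lemma tensor_lin_ext: "tensor p q = lin_ext (\<lambda>x. lin_ext (\<lambda>y. wvec (x @ y)) q) p"
  by (simp add: tensor_def lin_ext_def smult_sum mult.commute)

lemma tensor_wvec: "tensor (wvec u) q = lin_ext (\<lambda>y. wvec (u @ y)) q"
  by (simp add: tensor_lin_ext)

lemma tensor_wvec_wvec: "tensor (wvec x) (wvec y) = wvec (x @ y)"
  by (simp add: tensor_wvec)

lemma tensor_add_left [simp]: "tensor (p + q) s = tensor p s + tensor q s"
  by (simp add: tensor_lin_ext)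

lemma tensor_add_right [simp]: "tensor s (p + q) = tensor s p + tensor s q"
  by (simp add: tensor_lin_ext lin_ext_fun_add)

lemma tensor_smult_left [simp]: "tensor (smult c p) q = smult c (tensor p q)"
  by (simp add: tensor_lin_ext)

lemma tensor_smult_right [simp]: "tensor p (smult c q) = smult c (tensor p q)"
  by (simp add: tensor_lin_ext lin_ext_fun_smult)

lemma tensor_nil: "tensor (wvec []) p = p"
  by (simp add: tensor_wvec)

lemma homog_tensor: "homog m p \<Longrightarrow> homog n q \<Longrightarrow> homog (m + n) (tensor p q)"
  unfolding tensor_lin_ext by (intro homog_lin_ext homog_single) (simp add: homog_keys)

section \<open>The bracket determined by r\<close>

definition rpair :: "(('b, 'k::field) tv \<Rightarrow> ('b, 'k) tv) \<Rightarrow> 'b \<Rightarrow> 'b \<Rightarrow> ('b, 'k) tv" where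
  "rpair R a b = R (wvec [a, b])"

definition word_bracket ::
    "(('b, 'k::field) tv \<Rightarrow> ('b, 'k) tv) \<Rightarrow> 'b list \<Rightarrow> 'b list \<Rightarrow> ('b, 'k) tv" where
  "word_bracket R x y = (\<Sum>i<length x. \<Sum>j<length y.
     lin_ext (\<lambda>v. wvec (x[i := v!0] @ y[j := v!1])) (rpair R (x!i) (y!j)))"

definition bracket_of ::
    "(('b, 'k::field) tv \<Rightarrow> ('b, 'k) tv) \<Rightarrow> ('b, 'k) tv \<Rightarrow> ('b, 'k) tv \<Rightarrow> ('b, 'k) tv" where
  "bracket_of R p q = lin_ext (\<lambda>x. lin_ext (\<lambda>y. word_bracket R x y) q) p"

lemma bracket_of_wvec: "bracket_of R (wvec x) (wvec y) = word_bracket R x y"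
  by (simp add: bracket_of_def)

lemma bracket_of_add_left [simp]: "bracket_of R (p + q) s = bracket_of R p s + bracket_of R q s"
  by (simp add: bracket_of_def)

lemma bracket_of_add_right [simp]: "bracket_of R s (p + q) = bracket_of R s p + bracket_of R s q"
  by (simp add: bracket_of_def lin_ext_fun_add)

lemma bracket_of_smult_left [simp]: "bracket_of R (smult c p) q = smult c (bracket_of R p q)"
  by (simp add: bracket_of_def)

lemma bracket_of_smult_right [simp]: "bracket_of R p (smult c q) = smult c (bracket_of R p q)"
  by (simp add: bracket_of_def lin_ext_fun_smult)

definition cybe_lhs :: "(('b, 'k::field) tv \<Rightarrow> ('b, 'k) tv) \<Rightarrow> ('b, 'k) tv \<Rightarrow> ('b, 'k) tv" where
  "cybe_lhs R X = commut (r12 R) (r13 R) X - commut (r23 R) (r12 R) X + commut (r13 R) (r23 R) X"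

lemma CYBE_iff: "CYBE R \<longleftrightarrow> (\<forall>X. homog 3 X \<longrightarrow> cybe_lhs R X = 0)"
  by (simp add: CYBE_def cybe_lhs_def)

locale vv_endomorphism =
  fixes R :: "('b, 'k::field) tv \<Rightarrow> ('b, 'k) tv"
  assumes R_End: "R \<in> EndVV"
begin

lemma R_linear: "tv_linear R"
  using R_End by (simp add: EndVV_def tv_linear_def)

lemma R_homog: "homog 2 (R p)"
  using R_End by (simp add: EndVV_def)

lemma rpair_homog: "homog 2 (rpair R a b)"
  by (simp add: rpair_def R_homog)

lemma word_bracket_homog: "homog (length x + length y) (word_bracket R x y)"
  unfolding word_bracket_def by (auto intro!: homog_sum homog_lin_ext homog_single)

lemma word_bracket_letters: "word_bracket R [a] [b] = rpair R a b"
proof -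
  have "word_bracket R [a] [b] = lin_ext (\<lambda>v. wvec [v!0, v!1]) (rpair R a b)"
    by (simp add: word_bracket_def)
  also have "\<dots> = lin_ext wvec (rpair R a b)"
    by (rule lin_ext_homog2[symmetric, OF rpair_homog])
  finally show ?thesis by simp
qed

lemma word_bracket_append_left:
  "word_bracket R (u @ v) w = tensor (wvec u) (word_bracket R v w)
     + perm213 (length v) (length u) (length w) (tensor (wvec v) (word_bracket R u w))"
proof -
  let ?T = "\<lambda>x i j. lin_ext (\<lambda>t. wvec (x[i := t!0] @ w[j := t!1])) (rpair R (x!i) (w!j))"
  have "word_bracket R (u @ v) w = (\<Sum>i<length u. \<Sum>j<length w. ?T (u @ v) i j)
          + (\<Sum>i<length v. \<Sum>j<length w. ?T (u @ v) (length u + i) j)"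
    by (simp add: word_bracket_def sum_lessThan_add)
  also have "(\<Sum>i<length u. \<Sum>j<length w. ?T (u @ v) i j) =
     (\<Sum>i<length u. \<Sum>j<length w.
        lin_ext (\<lambda>t. wvec (u[i := t!0] @ v @ w[j := t!1])) (rpair R (u!i) (w!j)))"
    by (intro sum.cong refl) (simp add: list_update_append nth_append)
  also have "\<dots> = perm213 (length v) (length u) (length w) (tensor (wvec v) (word_bracket R u w))"
    by (simp add: tensor_wvec word_bracket_def lin_ext_sum tv_linear_sum[OF tv_linear_perms(4)]
        tv_linear_lin_ext[OF tv_linear_perms(4)] lin_ext_lin_ext perm213_single)
  also have "(\<Sum>i<length v. \<Sum>j<length w. ?T (u @ v) (length u + i) j) =
     (\<Sum>i<length v. \<Sum>j<length w.
        lin_ext (\<lambda>t. wvec (u @ v[i := t!0] @ w[j := t!1])) (rpair R (v!i) (w!j)))"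
    by (intro sum.cong refl) (simp add: list_update_append nth_append)
  also have "\<dots> = tensor (wvec u) (word_bracket R v w)"
    by (simp add: tensor_wvec word_bracket_def lin_ext_sum lin_ext_lin_ext)
  finally show ?thesis by (simp add: add.commute)
qed

lemma word_bracket_append_right: "word_bracket R x (y @ z) =
   (\<Sum>i<length x. \<Sum>p<length y.
      lin_ext (\<lambda>v. wvec (x[i := v!0] @ y[p := v!1] @ z)) (rpair R (x!i) (y!p))) +
   (\<Sum>i<length x. \<Sum>r<length z.
      lin_ext (\<lambda>v. wvec (x[i := v!0] @ y @ z[r := v!1])) (rpair R (x!i) (z!r)))"
proof -
  have "word_bracket R x (y @ z) = (\<Sum>i<length x.
     (\<Sum>p<length y. lin_ext (\<lambda>v. wvec (x[i := v!0] @ (y @ z)[p := v!1])) (rpair R (x!i) ((y @ z)!p)))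
   + (\<Sum>r<length z. lin_ext (\<lambda>v. wvec (x[i := v!0] @ (y @ z)[length y + r := v!1]))
                              (rpair R (x!i) ((y @ z)!(length y + r)))))"
    unfolding word_bracket_def by (simp add: sum_lessThan_add)
  also have "\<dots> = (\<Sum>i<length x.
     (\<Sum>p<length y. lin_ext (\<lambda>v. wvec (x[i := v!0] @ y[p := v!1] @ z)) (rpair R (x!i) (y!p)))
   + (\<Sum>r<length z. lin_ext (\<lambda>v. wvec (x[i := v!0] @ y @ z[r := v!1])) (rpair R (x!i) (z!r))))"
    by (intro sum.cong refl arg_cong2[where f = "(+)"]) (simp_all add: list_update_append nth_append)
  finally show ?thesis by (simp add: sum.distrib)
qed

lemma bracket_of_homog:
  assumes "homog m p" "homog n q"
  shows "homog (m + n) (bracket_of R p q)"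
  unfolding bracket_of_def
proof (intro homog_lin_ext)
  fix x y assume "x \<in> keys p" "y \<in> keys q"
  then have "length x = m" "length y = n" using assms homog_keys by blast+
  then show "homog (m + n) (word_bracket R x y)" using word_bracket_homog[of x y] by simp
qed

lemma r12_lin_ext:
  "r12 R X = lin_ext (\<lambda>w. if length w = 3 then tensor (R (wvec [w!0, w!1])) (wvec [w!2]) else 0) X"
  unfolding r12_def lin_ext_def
  by (simp add: sum.inter_filter if_distrib[of "smult _"] cong: if_cong)

lemma r23_lin_ext:
  "r23 R X = lin_ext (\<lambda>w. if length w = 3 then tensor (wvec [w!0]) (R (wvec [w!1, w!2])) else 0) X"
  unfolding r23_def lin_ext_def
  by (simp add: sum.inter_filter if_distrib[of "smult _"] cong: if_cong)

lemma tv_linear_r12: "tv_linear (r12 R)"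
  unfolding tv_linear_def r12_lin_ext by simp

lemma tv_linear_r23: "tv_linear (r23 R)"
  unfolding tv_linear_def r23_lin_ext by simp

lemma tv_linear_r13: "tv_linear (r13 R)"
  unfolding tv_linear_def r13_def
  by (simp add: tv_linear_add[OF tv_linear_r12] tv_linear_smult[OF tv_linear_r12]
      tv_linear_add[OF tv_linear_perms(5)] tv_linear_smult[OF tv_linear_perms(5)])

lemma r12_wvec: "r12 R (wvec [a, b, c]) = lin_ext (\<lambda>v. wvec [v!0, v!1, c]) (rpair R a b)"
proof -
  have "r12 R (wvec [a, b, c]) = lin_ext (\<lambda>v. wvec (v @ [c])) (rpair R a b)"
    by (simp add: r12_lin_ext tensor_lin_ext rpair_def)
  then show ?thesis by (subst (asm) lin_ext_homog2[OF rpair_homog]) simp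
qed

lemma r23_wvec: "r23 R (wvec [a, b, c]) = lin_ext (\<lambda>v. wvec [a, v!0, v!1]) (rpair R b c)"
proof -
  have "r23 R (wvec [a, b, c]) = lin_ext (\<lambda>v. wvec ([a] @ v)) (rpair R b c)"
    by (simp add: r23_lin_ext tensor_wvec rpair_def)
  then show ?thesis by (subst (asm) lin_ext_homog2[OF rpair_homog]) simp
qed

lemma r13_wvec: "r13 R (wvec [a, b, c]) = lin_ext (\<lambda>v. wvec [v!0, b, v!1]) (rpair R a c)"
  by (simp add: r13_def P23_single r12_wvec tv_linear_lin_ext[OF tv_linear_perms(5)])

lemma lin_ext_r_products_wvec:
  fixes G :: "'b \<Rightarrow> 'b \<Rightarrow> 'b \<Rightarrow> ('c, 'k) tv"
  shows "lin_ext (\<lambda>t. G (t!0) (t!1) (t!2)) (r12 R (r13 R (wvec [a, b, c])))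
      = lin_ext (\<lambda>w. lin_ext (\<lambda>v. G (v!0) (v!1) (w!1)) (rpair R (w!0) b)) (rpair R a c)"
    and "lin_ext (\<lambda>t. G (t!0) (t!1) (t!2)) (r13 R (r12 R (wvec [a, b, c])))
      = lin_ext (\<lambda>w. lin_ext (\<lambda>v. G (v!0) (w!1) (v!1)) (rpair R (w!0) c)) (rpair R a b)"
    and "lin_ext (\<lambda>t. G (t!0) (t!1) (t!2)) (r23 R (r12 R (wvec [a, b, c])))
      = lin_ext (\<lambda>w. lin_ext (\<lambda>v. G (w!0) (v!0) (v!1)) (rpair R (w!1) c)) (rpair R a b)"
    and "lin_ext (\<lambda>t. G (t!0) (t!1) (t!2)) (r12 R (r23 R (wvec [a, b, c])))
      = lin_ext (\<lambda>w. lin_ext (\<lambda>v. G (v!0) (v!1) (w!1)) (rpair R a (w!0))) (rpair R b c)"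
    and "lin_ext (\<lambda>t. G (t!0) (t!1) (t!2)) (r13 R (r23 R (wvec [a, b, c])))
      = lin_ext (\<lambda>w. lin_ext (\<lambda>v. G (v!0) (w!0) (v!1)) (rpair R a (w!1))) (rpair R b c)"
    and "lin_ext (\<lambda>t. G (t!0) (t!1) (t!2)) (r23 R (r13 R (wvec [a, b, c])))
      = lin_ext (\<lambda>w. lin_ext (\<lambda>v. G (w!0) (v!0) (v!1)) (rpair R b (w!1))) (rpair R a c)"
  by (simp_all add: r12_wvec r13_wvec r23_wvec lin_ext_lin_ext tv_linear_lin_ext[OF tv_linear_r12]
      tv_linear_lin_ext[OF tv_linear_r13] tv_linear_lin_ext[OF tv_linear_r23])

lemma homog_r12: "homog 3 (r12 R X)"
  unfolding r12_lin_ext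
  using homog_tensor[OF R_homog homog_single[of "[_]" 1]] by (intro homog_lin_ext) simp

lemma homog_r23: "homog 3 (r23 R X)"
  unfolding r23_lin_ext
  using homog_tensor[OF homog_single[of "[_]" 1] R_homog] by (intro homog_lin_ext) (simp add: numeral_3_eq_3)

lemma homog_r13: "homog 3 (r13 R X)"
  unfolding r13_def by (intro homog_P23 homog_r12)

lemma homog_cybe_lhs: "homog 3 (cybe_lhs R X)"
  unfolding cybe_lhs_def commut_def
  by (intro homog_add homog_diff homog_r12 homog_r13 homog_r23)

lemma tv_linear_cybe_lhs: "tv_linear (cybe_lhs R)"
  unfolding tv_linear_def cybe_lhs_def commut_def
  by (simp add: tv_linear_add[OF tv_linear_r12] tv_linear_smult[OF tv_linear_r12]
      tv_linear_add[OF tv_linear_r13] tv_linear_smult[OF tv_linear_r13]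
      tv_linear_add[OF tv_linear_r23] tv_linear_smult[OF tv_linear_r23] algebra_simps)

end

locale skew_vv_endomorphism = vv_endomorphism R for R :: "('b, 'k::field) tv \<Rightarrow> ('b, 'k) tv" +
  assumes R_skew: "skew_r R"
begin

lemma rpair_swap: "rpair R b a = - flipP (rpair R a b)"
proof -
  have "flipP (wvec [b, a]) = (wvec [a, b] :: ('b, 'k) tv)"
    unfolding flipP_def using perm21_single[of "[b]" 1 "[a]" 1 1] by simp
  moreover have "rpair R b a = - r21 R (wvec [b, a])"
    unfolding rpair_def by (subst R_skew[unfolded skew_r_def]) simp
  ultimately show ?thesis by (simp add: r21_def rpair_def)
qed

lemma lin_ext_rpair_swap:
  "lin_ext (\<lambda>v. F (v!0) (v!1)) (rpair R b a) = - lin_ext (\<lambda>v. F (v!1) (v!0)) (rpair R a b)"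
proof -
  have "lin_ext (\<lambda>v. F (v!0) (v!1)) (rpair R b a)
      = - lin_ext (\<lambda>v. F (v!0) (v!1)) (flipP (rpair R a b))"
    by (subst rpair_swap) (rule lin_ext_neg)
  also have "lin_ext (\<lambda>v. F (v!0) (v!1)) (flipP (rpair R a b))
      = lin_ext (\<lambda>v. F (key21 1 1 v ! 0) (key21 1 1 v ! 1)) (rpair R a b)"
    unfolding flipP_def perm21_def by (rule lin_ext_map_key_involution) (rule key21_involution)
  also have "\<dots> = lin_ext (\<lambda>v. F (v!1) (v!0)) (rpair R a b)"
  proof (rule lin_ext_cong)
    fix w assume "w \<in> keys (rpair R a b)"
    then have "key21 1 1 w = [w!1, w!0]"
      by (simp add: key21_1_1 homog_keys[OF rpair_homog] del: One_nat_def)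
    then show "F (key21 1 1 w ! 0) (key21 1 1 w ! 1) = F (w!1) (w!0)" by simp
  qed
  finally show ?thesis .
qed

lemma word_bracket_skew: "word_bracket R y x = - perm21 (length x) (length y) (word_bracket R x y)"
proof -
  have "word_bracket R y x = (\<Sum>j<length y. \<Sum>i<length x.
      - lin_ext (\<lambda>v. wvec (y[j := v!1] @ x[i := v!0])) (rpair R (x!i) (y!j)))"
    unfolding word_bracket_def by (intro sum.cong refl) (rule lin_ext_rpair_swap)
  also have "\<dots> = - (\<Sum>i<length x. \<Sum>j<length y.
      lin_ext (\<lambda>v. wvec (y[j := v!1] @ x[i := v!0])) (rpair R (x!i) (y!j)))"
    by (simp add: sum_negf sum.swap[of _ "{..<length y}"])
  also have "\<dots> = - perm21 (length x) (length y) (word_bracket R x y)"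
    by (simp add: word_bracket_def tv_linear_sum[OF tv_linear_perms(1)]
        tv_linear_lin_ext[OF tv_linear_perms(1)] perm21_single)
  finally show ?thesis .
qed

lemma bracket_of_skew:
  assumes "homog m v" "homog n w"
  shows "bracket_of R w v = - perm21 m n (bracket_of R v w)"
proof -
  have "bracket_of R w v = lin_ext (\<lambda>y. lin_ext (\<lambda>x. - perm21 m n (word_bracket R x y)) v) w"
    unfolding bracket_of_def
  proof (intro lin_ext_cong)
    fix y x assume "y \<in> keys w" "x \<in> keys v"
    then have "length x = m" "length y = n" using assms homog_keys by blast+
    then show "word_bracket R y x = - perm21 m n (word_bracket R x y)"
      using word_bracket_skew[of y x] by simp
  qed
  also have "\<dots> = - perm21 m n (bracket_of R v w)"
    unfolding bracket_of_def
    by (simp only: lin_ext_swap[of _ v w] tv_linear_lin_ext[OF tv_linear_perms(1)] lin_ext_fun_neg)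
  finally show ?thesis .
qed

end

section \<open>The Jacobiator on words\<close>

definition jacobiator ::
    "(('b, 'k::field) tv \<Rightarrow> ('b, 'k) tv \<Rightarrow> ('b, 'k) tv) \<Rightarrow> nat \<Rightarrow> nat \<Rightarrow> nat
      \<Rightarrow> ('b, 'k) tv \<Rightarrow> ('b, 'k) tv \<Rightarrow> ('b, 'k) tv \<Rightarrow> ('b, 'k) tv" where
  "jacobiator br l m n u v w =
     br u (br v w) + perm231 m n l (br v (br w u)) + perm312 n l m (br w (br u v))"

context vv_endomorphism
begin

text \<open>The four kinds of terms of {x, {y, z}} on words. The inner bracket replaces the letters
  y!j, z!k by r(y!j \<otimes> z!k) = \<Sum> w!0 \<otimes> w!1; the outer one then pairs x!i with a new letter
  w!0 or w!1, or with an old letter y!p (p \<noteq> j) or z!r (r \<noteq> k). The function \<phi>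
  concatenates the three words in the order produced by the block permutation in front of the
  term.\<close>
definition dbr_new_mid where
  "dbr_new_mid \<phi> x y z i j k = lin_ext (\<lambda>w. lin_ext (\<lambda>v.
     wvec (\<phi> (x[i := v!0]) (y[j := v!1]) (z[k := w!1]))) (rpair R (x!i) (w!0))) (rpair R (y!j) (z!k))"

definition dbr_new_right where
  "dbr_new_right \<phi> x y z i j k = lin_ext (\<lambda>w. lin_ext (\<lambda>v.
     wvec (\<phi> (x[i := v!0]) (y[j := w!0]) (z[k := v!1]))) (rpair R (x!i) (w!1))) (rpair R (y!j) (z!k))"

definition dbr_old_mid where
  "dbr_old_mid \<phi> x y z i j k = lin_ext (\<lambda>w. \<Sum>p<length y. if p = j then 0 else lin_ext (\<lambda>v.
     wvec (\<phi> (x[i := v!0]) (y[j := w!0, p := v!1]) (z[k := w!1]))) (rpair R (x!i) (y!p)))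
     (rpair R (y!j) (z!k))"

definition dbr_old_right where
  "dbr_old_right \<phi> x y z i j k = lin_ext (\<lambda>w. \<Sum>r<length z. if r = k then 0 else lin_ext (\<lambda>v.
     wvec (\<phi> (x[i := v!0]) (y[j := w!0]) (z[k := w!1, r := v!1]))) (rpair R (x!i) (z!r)))
     (rpair R (y!j) (z!k))"

lemma word_bracket_updated_expand:
  assumes jk: "j < length y" "k < length z" and h: "tv_linear h"
    and h\<phi>: "\<And>a b c. length a = length x \<Longrightarrow> length b = length y \<Longrightarrow> length c = length z \<Longrightarrow>
      h (wvec (a @ b @ c)) = wvec (\<phi> a b c)"
  shows "h (word_bracket R x (y[j := e] @ z[k := f])) = (\<Sum>i<length x.
      lin_ext (\<lambda>v. wvec (\<phi> (x[i := v!0]) (y[j := v!1]) (z[k := f]))) (rpair R (x!i) e)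
    + (\<Sum>p<length y. if p = j then 0 else
         lin_ext (\<lambda>v. wvec (\<phi> (x[i := v!0]) (y[j := e, p := v!1]) (z[k := f]))) (rpair R (x!i) (y!p)))
    + lin_ext (\<lambda>v. wvec (\<phi> (x[i := v!0]) (y[j := e]) (z[k := v!1]))) (rpair R (x!i) f)
    + (\<Sum>r<length z. if r = k then 0 else
         lin_ext (\<lambda>v. wvec (\<phi> (x[i := v!0]) (y[j := e]) (z[k := f, r := v!1]))) (rpair R (x!i) (z!r))))"
proof -
  let ?y = "y[j := e]" and ?z = "z[k := f]"
  have mid: "(\<Sum>p<length y. lin_ext (\<lambda>v. wvec (\<phi> (x[i := v!0]) (?y[p := v!1]) ?z)) (rpair R (x!i) (?y!p)))
    = lin_ext (\<lambda>v. wvec (\<phi> (x[i := v!0]) (y[j := v!1]) ?z)) (rpair R (x!i) e)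
    + (\<Sum>p<length y. if p = j then 0 else
         lin_ext (\<lambda>v. wvec (\<phi> (x[i := v!0]) (y[j := e, p := v!1]) ?z)) (rpair R (x!i) (y!p)))" for i
    by (subst sum_split_off[OF jk(1)]) (auto simp: jk intro!: sum.cong)
  have right: "(\<Sum>r<length z. lin_ext (\<lambda>v. wvec (\<phi> (x[i := v!0]) ?y (?z[r := v!1]))) (rpair R (x!i) (?z!r)))
    = lin_ext (\<lambda>v. wvec (\<phi> (x[i := v!0]) ?y (z[k := v!1]))) (rpair R (x!i) f)
    + (\<Sum>r<length z. if r = k then 0 else
         lin_ext (\<lambda>v. wvec (\<phi> (x[i := v!0]) ?y (z[k := f, r := v!1]))) (rpair R (x!i) (z!r)))" for i
    by (subst sum_split_off[OF jk(2)]) (auto simp: jk intro!: sum.cong)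
  have "h (word_bracket R x (?y @ ?z)) =
     (\<Sum>i<length x. \<Sum>p<length y.
        lin_ext (\<lambda>v. wvec (\<phi> (x[i := v!0]) (?y[p := v!1]) ?z)) (rpair R (x!i) (?y!p))) +
     (\<Sum>i<length x. \<Sum>r<length z.
        lin_ext (\<lambda>v. wvec (\<phi> (x[i := v!0]) ?y (?z[r := v!1]))) (rpair R (x!i) (?z!r)))"
    unfolding word_bracket_append_right using h
    by (simp add: tv_linear_sum tv_linear_lin_ext h\<phi> tv_linear_add)
  then show ?thesis
    by (simp only: mid right sum.distrib add.assoc)
qed

lemma bracket_of_word_bracket_expand:
  assumes h: "tv_linear h"
    and h\<phi>: "\<And>a b c. length a = length x \<Longrightarrow> length b = length y \<Longrightarrow> length c = length z \<Longrightarrow>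
      h (wvec (a @ b @ c)) = wvec (\<phi> a b c)"
  shows "h (bracket_of R (wvec x) (word_bracket R y z)) = (\<Sum>i<length x. \<Sum>j<length y. \<Sum>k<length z.
     dbr_new_mid \<phi> x y z i j k + dbr_old_mid \<phi> x y z i j k
     + dbr_new_right \<phi> x y z i j k + dbr_old_right \<phi> x y z i j k)"
proof -
  have "h (bracket_of R (wvec x) (word_bracket R y z)) = (\<Sum>j<length y. \<Sum>k<length z.
      lin_ext (\<lambda>w. h (word_bracket R x (y[j := w!0] @ z[k := w!1]))) (rpair R (y!j) (z!k)))"
    by (simp add: bracket_of_def word_bracket_def[of R y z] lin_ext_sum tv_linear_sum[OF h]
        tv_linear_lin_ext[OF h] lin_ext_lin_ext)
  also have "\<dots> = (\<Sum>j<length y. \<Sum>k<length z. \<Sum>i<length x.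
     dbr_new_mid \<phi> x y z i j k + dbr_old_mid \<phi> x y z i j k
     + dbr_new_right \<phi> x y z i j k + dbr_old_right \<phi> x y z i j k)"
    by (intro sum.cong refl)
      (simp only: word_bracket_updated_expand[OF _ _ h h\<phi>] lessThan_iff dbr_new_mid_def
        dbr_new_right_def dbr_old_mid_def dbr_old_right_def lin_ext_fun_sum lin_ext_fun_add)
  also have "\<dots> = (\<Sum>i<length x. \<Sum>j<length y. \<Sum>k<length z.
     dbr_new_mid \<phi> x y z i j k + dbr_old_mid \<phi> x y z i j k
     + dbr_new_right \<phi> x y z i j k + dbr_old_right \<phi> x y z i j k)"
    by (rule sum_rotate3)
  finally show ?thesis .
qed

end

context skew_vv_endomorphism
begin

lemma lin_ext_rpair_swap_inner:
  "lin_ext (\<lambda>w. lin_ext (\<lambda>v. F (w!0) (w!1) (v!0) (v!1)) (rpair R d c)) (rpair R a b)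
   = - lin_ext (\<lambda>w. lin_ext (\<lambda>v. F (v!0) (v!1) (w!1) (w!0)) (rpair R a b)) (rpair R c d)"
proof -
  have "lin_ext (\<lambda>w. lin_ext (\<lambda>v. F (w!0) (w!1) (v!0) (v!1)) (rpair R d c)) (rpair R a b)
     = lin_ext (\<lambda>w. - lin_ext (\<lambda>v. F (w!0) (w!1) (v!1) (v!0)) (rpair R c d)) (rpair R a b)"
    by (simp only: lin_ext_rpair_swap)
  also have "\<dots> = - lin_ext (\<lambda>v. lin_ext (\<lambda>w. F (w!0) (w!1) (v!1) (v!0)) (rpair R a b)) (rpair R c d)"
    by (simp only: lin_ext_fun_neg lin_ext_swap[of _ "rpair R c d"])
  finally show ?thesis .
qed

text \<open>Both orders of applying two brackets on disjoint pairs of letters occur, once in each of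
  two cyclically related terms of the Jacobiator, with opposite signs.\<close>
lemma dbr_old_terms_cancel:
  "(\<Sum>i<length x. \<Sum>j<length y. \<Sum>k<length z. dbr_old_mid \<phi> x y z i j k)
   + (\<Sum>i<length x. \<Sum>j<length y. \<Sum>k<length z. dbr_old_right (\<lambda>a b c. \<phi> b c a) z x y k i j) = 0"
proof -
  define c where "c i j k p = (if p = j then 0 else lin_ext (\<lambda>w. lin_ext (\<lambda>v.
      wvec (\<phi> (x[i := v!0]) (y[j := w!0, p := v!1]) (z[k := w!1]))) (rpair R (x!i) (y!p)))
      (rpair R (y!j) (z!k)))" for i j k p
  have mid: "dbr_old_mid \<phi> x y z i j k = (\<Sum>p<length y. c i j k p)" for i j k
    unfolding dbr_old_mid_def c_def lin_ext_fun_sum by (intro sum.cong) auto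
  have swap: "lin_ext (\<lambda>w. lin_ext (\<lambda>v. wvec (\<phi> (x[i := w!0]) (y[j := w!1, r := v!1]) (z[k := v!0])))
        (rpair R (z!k) (y!r))) (rpair R (x!i) (y!j))
      = - lin_ext (\<lambda>w. lin_ext (\<lambda>v. wvec (\<phi> (x[i := v!0]) (y[r := w!0, j := v!1]) (z[k := w!1])))
        (rpair R (x!i) (y!j))) (rpair R (y!r) (z!k))" if "j \<noteq> r" for i j k r
    using lin_ext_rpair_swap_inner[where a = "x!i" and b = "y!j" and c = "y!r" and d = "z!k" and
        F = "\<lambda>w0 w1 v0 v1. wvec (\<phi> (x[i := w0]) (y[j := w1, r := v1]) (z[k := v0]))"]
    by (simp only: list_update_swap[OF that])
  have right: "dbr_old_right (\<lambda>a b c. \<phi> b c a) z x y k i j = (\<Sum>r<length y. - c i r k j)" for i j k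
    unfolding dbr_old_right_def c_def lin_ext_fun_sum
    by (intro sum.cong) (auto simp: swap simp del: One_nat_def)
  have "(\<Sum>i<length x. \<Sum>j<length y. \<Sum>k<length z. \<Sum>r<length y. c i r k j)
      = (\<Sum>i<length x. \<Sum>j<length y. \<Sum>k<length z. \<Sum>p<length y. c i j k p)"
    by (rule sum.cong[OF refl]) (rule sum_swap_first_last)
  then show ?thesis
    by (simp add: mid right sum_negf)
qed

lemma lin_ext_rpair_swap_under:
  "lin_ext (\<lambda>w. lin_ext (\<lambda>v. F w (v!0) (v!1)) (rpair R b (f w))) Q
   = - lin_ext (\<lambda>w. lin_ext (\<lambda>v. F w (v!1) (v!0)) (rpair R (f w) b)) Q"
proof -
  have "(\<lambda>w. lin_ext (\<lambda>v. F w (v!0) (v!1)) (rpair R b (f w)))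
      = (\<lambda>w. - lin_ext (\<lambda>v. F w (v!1) (v!0)) (rpair R (f w) b))"
    by (rule ext) (rule lin_ext_rpair_swap[where F = "F w" for w])
  then show ?thesis by (simp add: lin_ext_fun_neg)
qed

lemma dbr_new_terms_eq_cybe_lhs:
  fixes G :: "'b \<Rightarrow> 'b \<Rightarrow> 'b \<Rightarrow> ('c, 'k) tv"
  defines "\<Phi> \<equiv> lin_ext (\<lambda>t. G (t!0) (t!1) (t!2))"
  shows "lin_ext (\<lambda>w. lin_ext (\<lambda>v. G (v!0) (v!1) (w!1)) (rpair R a (w!0))) (rpair R b c)
       + lin_ext (\<lambda>w. lin_ext (\<lambda>v. G (v!0) (w!0) (v!1)) (rpair R a (w!1))) (rpair R b c)
       + lin_ext (\<lambda>w. lin_ext (\<lambda>v. G (w!1) (v!0) (v!1)) (rpair R b (w!0))) (rpair R c a)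
       + lin_ext (\<lambda>w. lin_ext (\<lambda>v. G (v!1) (v!0) (w!0)) (rpair R b (w!1))) (rpair R c a)
       + lin_ext (\<lambda>w. lin_ext (\<lambda>v. G (v!1) (w!1) (v!0)) (rpair R c (w!0))) (rpair R a b)
       + lin_ext (\<lambda>w. lin_ext (\<lambda>v. G (w!0) (v!1) (v!0)) (rpair R c (w!1))) (rpair R a b)
     = \<Phi> (cybe_lhs R (wvec [a, b, c]))"
proof -
  have L: "tv_linear \<Phi>" unfolding \<Phi>_def by (rule lin_ext_is_linear)
  note r12_r13 = lin_ext_r_products_wvec(1)[of G, folded \<Phi>_def]
    and r13_r12 = lin_ext_r_products_wvec(2)[of G, folded \<Phi>_def]
    and r23_r12 = lin_ext_r_products_wvec(3)[of G, folded \<Phi>_def]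
    and r12_r23 = lin_ext_r_products_wvec(4)[of G, folded \<Phi>_def]
    and r13_r23 = lin_ext_r_products_wvec(5)[of G, folded \<Phi>_def]
    and r23_r13 = lin_ext_r_products_wvec(6)[of G, folded \<Phi>_def]
  have third: "lin_ext (\<lambda>w. lin_ext (\<lambda>v. G (w!1) (v!0) (v!1)) (rpair R b (w!0))) (rpair R c a)
      = - \<Phi> (r23 R (r13 R (wvec [a, b, c])))"
    unfolding r23_r13
    by (rule lin_ext_rpair_swap[where F = "\<lambda>w0 w1. lin_ext (\<lambda>v. G w1 (v!0) (v!1)) (rpair R b w0)"])
  have fourth: "lin_ext (\<lambda>w. lin_ext (\<lambda>v. G (v!1) (v!0) (w!0)) (rpair R b (w!1))) (rpair R c a)
      = \<Phi> (r12 R (r13 R (wvec [a, b, c])))"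
  proof -
    have "lin_ext (\<lambda>w. lin_ext (\<lambda>v. G (v!1) (v!0) (w!0)) (rpair R b (w!1))) (rpair R c a)
       = - lin_ext (\<lambda>w. lin_ext (\<lambda>v. G (v!1) (v!0) (w!1)) (rpair R b (w!0))) (rpair R a c)"
      by (rule lin_ext_rpair_swap[where F = "\<lambda>w0 w1. lin_ext (\<lambda>v. G (v!1) (v!0) w0) (rpair R b w1)"])
    also have "lin_ext (\<lambda>w. lin_ext (\<lambda>v. G (v!1) (v!0) (w!1)) (rpair R b (w!0))) (rpair R a c)
       = - lin_ext (\<lambda>w. lin_ext (\<lambda>v. G (v!0) (v!1) (w!1)) (rpair R (w!0) b)) (rpair R a c)"
      by (rule lin_ext_rpair_swap_under[where F = "\<lambda>w v0 v1. G v1 v0 (w!1)" and f = "\<lambda>w. w!0"])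
    finally show ?thesis unfolding r12_r13 by simp
  qed
  have fifth: "lin_ext (\<lambda>w. lin_ext (\<lambda>v. G (v!1) (w!1) (v!0)) (rpair R c (w!0))) (rpair R a b)
      = - \<Phi> (r13 R (r12 R (wvec [a, b, c])))"
    unfolding r13_r12
    by (rule lin_ext_rpair_swap_under[where F = "\<lambda>w v0 v1. G v1 (w!1) v0" and f = "\<lambda>w. w!0"])
  have sixth: "lin_ext (\<lambda>w. lin_ext (\<lambda>v. G (w!0) (v!1) (v!0)) (rpair R c (w!1))) (rpair R a b)
      = - \<Phi> (r23 R (r12 R (wvec [a, b, c])))"
    unfolding r23_r12
    by (rule lin_ext_rpair_swap_under[where F = "\<lambda>w v0 v1. G (w!0) v1 v0" and f = "\<lambda>w. w!1"])
  show ?thesis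
    unfolding cybe_lhs_def commut_def tv_linear_diff[OF L] tv_linear_add[OF L]
    unfolding third fourth fifth sixth r12_r23[symmetric] r13_r23[symmetric]
    by (simp add: algebra_simps)
qed

lemma jacobiator_bracket_of_words_expand:
  "jacobiator (bracket_of R) (length x) (length y) (length z) (wvec x) (wvec y) (wvec z)
   = (\<Sum>i<length x. \<Sum>j<length y. \<Sum>k<length z.
        dbr_new_mid (\<lambda>a b c. a @ b @ c) x y z i j k + dbr_new_right (\<lambda>a b c. a @ b @ c) x y z i j k
      + dbr_new_mid (\<lambda>a b c. c @ a @ b) y z x j k i + dbr_new_right (\<lambda>a b c. c @ a @ b) y z x j k i
      + dbr_new_mid (\<lambda>a b c. b @ c @ a) z x y k i j + dbr_new_right (\<lambda>a b c. b @ c @ a) z x y k i j)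
   + ((\<Sum>i<length x. \<Sum>j<length y. \<Sum>k<length z. dbr_old_mid (\<lambda>a b c. a @ b @ c) x y z i j k)
     + (\<Sum>i<length x. \<Sum>j<length y. \<Sum>k<length z. dbr_old_right (\<lambda>a b c. b @ c @ a) z x y k i j))
   + ((\<Sum>i<length x. \<Sum>j<length y. \<Sum>k<length z. dbr_old_mid (\<lambda>a b c. c @ a @ b) y z x j k i)
     + (\<Sum>i<length x. \<Sum>j<length y. \<Sum>k<length z. dbr_old_right (\<lambda>a b c. a @ b @ c) x y z i j k))
   + ((\<Sum>i<length x. \<Sum>j<length y. \<Sum>k<length z. dbr_old_mid (\<lambda>a b c. b @ c @ a) z x y k i j)
     + (\<Sum>i<length x. \<Sum>j<length y. \<Sum>k<length z. dbr_old_right (\<lambda>a b c. c @ a @ b) y z x j k i))"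
proof -
  let ?S = "\<lambda>f. (\<Sum>i<length x. \<Sum>j<length y. \<Sum>k<length z. f i j k)"
  let ?f1 = "\<lambda>a b c. a @ b @ c" and ?f2 = "\<lambda>a b c. c @ a @ b" and ?f3 = "\<lambda>a b c. b @ c @ a"
  have T1: "bracket_of R (wvec x) (word_bracket R y z) = ?S (\<lambda>i j k.
      dbr_new_mid ?f1 x y z i j k + dbr_old_mid ?f1 x y z i j k
      + dbr_new_right ?f1 x y z i j k + dbr_old_right ?f1 x y z i j k)"
    by (rule bracket_of_word_bracket_expand[where h = "\<lambda>p. p"]) (simp_all add: tv_linear_def)
  have T2: "perm231 (length y) (length z) (length x) (bracket_of R (wvec y) (word_bracket R z x))
    = ?S (\<lambda>i j k. dbr_new_mid ?f2 y z x j k i + dbr_old_mid ?f2 y z x j k i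
      + dbr_new_right ?f2 y z x j k i + dbr_old_right ?f2 y z x j k i)"
    by (subst bracket_of_word_bracket_expand[OF tv_linear_perms(2), where \<phi> = ?f2])
      (simp add: perm231_single, rule sum_rotate3)
  have T3: "perm312 (length z) (length x) (length y) (bracket_of R (wvec z) (word_bracket R x y))
    = ?S (\<lambda>i j k. dbr_new_mid ?f3 z x y k i j + dbr_old_mid ?f3 z x y k i j
      + dbr_new_right ?f3 z x y k i j + dbr_old_right ?f3 z x y k i j)"
    by (subst bracket_of_word_bracket_expand[OF tv_linear_perms(3), where \<phi> = ?f3])
      (simp add: perm312_single, rule sum_rotate3[symmetric])
  show ?thesis
    unfolding jacobiator_def bracket_of_wvec T1 T2 T3
    by (simp add: sum.distrib algebra_simps)
qed

lemma jacobiator_bracket_of_words: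
  "jacobiator (bracket_of R) (length x) (length y) (length z) (wvec x) (wvec y) (wvec z)
   = (\<Sum>i<length x. \<Sum>j<length y. \<Sum>k<length z.
       lin_ext (\<lambda>t. wvec (x[i := t!0] @ y[j := t!1] @ z[k := t!2])) (cybe_lhs R (wvec [x!i, y!j, z!k])))"
proof -
  let ?f1 = "\<lambda>a b c. a @ b @ c" and ?f2 = "\<lambda>a b c. c @ a @ b" and ?f3 = "\<lambda>a b c. b @ c @ a"
  have new: "dbr_new_mid ?f1 x y z i j k + dbr_new_right ?f1 x y z i j k
     + dbr_new_mid ?f2 y z x j k i + dbr_new_right ?f2 y z x j k i
     + dbr_new_mid ?f3 z x y k i j + dbr_new_right ?f3 z x y k i j
     = lin_ext (\<lambda>t. wvec (x[i := t!0] @ y[j := t!1] @ z[k := t!2])) (cybe_lhs R (wvec [x!i, y!j, z!k]))"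
    for i j k
    unfolding dbr_new_mid_def dbr_new_right_def
    by (rule dbr_new_terms_eq_cybe_lhs[where G = "\<lambda>\<alpha> \<beta> \<gamma>. wvec (x[i := \<alpha>] @ y[j := \<beta>] @ z[k := \<gamma>])"])
  note old1 = dbr_old_terms_cancel[of ?f1 x y z]
  have old2: "(\<Sum>i<length x. \<Sum>j<length y. \<Sum>k<length z. dbr_old_mid ?f2 y z x j k i)
      + (\<Sum>i<length x. \<Sum>j<length y. \<Sum>k<length z. dbr_old_right ?f1 x y z i j k) = 0"
    using dbr_old_terms_cancel[of ?f2 y z x]
    by (simp only: sum_rotate3[where B = "{..<length y}" and C = "{..<length z}" and D = "{..<length x}"])
  have old3: "(\<Sum>i<length x. \<Sum>j<length y. \<Sum>k<length z. dbr_old_mid ?f3 z x y k i j)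
      + (\<Sum>i<length x. \<Sum>j<length y. \<Sum>k<length z. dbr_old_right ?f2 y z x j k i) = 0"
    using dbr_old_terms_cancel[of ?f3 z x y]
    by (simp only: sum_rotate3[where B = "{..<length x}" and C = "{..<length y}" and D = "{..<length z}",
        symmetric])
  show ?thesis
    unfolding jacobiator_bracket_of_words_expand by (simp only: new old1 old2 old3 add_0_right)
qed

end

section \<open>Twisted Poisson structures from solutions of the CYBE\<close>

context vv_endomorphism
begin

lemma bracket_of_leibniz:
  assumes "homog l u" "homog m v" "homog n w"
  shows "bracket_of R (tensor u v) w
    = tensor u (bracket_of R v w) + perm213 m l n (tensor v (bracket_of R u w))"
proof -
  define T where "T u v w = bracket_of R (tensor u v) w
    - (tensor u (bracket_of R v w) + perm213 m l n (tensor v (bracket_of R u w)))" for u v w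
  have "T u v w = lin_ext (\<lambda>x. lin_ext (\<lambda>y. lin_ext (\<lambda>z. T (wvec x) (wvec y) (wvec z)) w) v) u"
    by (rule lin_ext_expand3) (auto simp: tv_linear_def T_def perms_add perms_smult algebra_simps)
  also have "\<dots> = 0"
  proof (intro lin_ext_eq_0)
    fix x y z assume "x \<in> keys u" "y \<in> keys v" "z \<in> keys w"
    then have "length x = l" "length y = m" "length z = n" using assms homog_keys by blast+
    then show "T (wvec x) (wvec y) (wvec z) = 0"
      by (simp add: T_def tensor_wvec_wvec bracket_of_wvec word_bracket_append_left)
  qed
  finally show ?thesis by (simp add: T_def)
qed

end

context skew_vv_endomorphism
begin

lemma bracket_of_jacobi:
  assumes "CYBE R" "homog l u" "homog m v" "homog n w"
  shows "jacobiator (bracket_of R) l m n u v w = 0"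
proof -
  have "jacobiator (bracket_of R) l m n u v w = lin_ext (\<lambda>x. lin_ext (\<lambda>y. lin_ext (\<lambda>z.
      jacobiator (bracket_of R) l m n (wvec x) (wvec y) (wvec z)) w) v) u"
    by (rule lin_ext_expand3) (auto simp: tv_linear_def jacobiator_def perms_add perms_smult algebra_simps)
  also have "\<dots> = 0"
  proof (intro lin_ext_eq_0)
    fix x y z assume "x \<in> keys u" "y \<in> keys v" "z \<in> keys w"
    then have "l = length x" "m = length y" "n = length z" using assms homog_keys by metis+
    moreover have "cybe_lhs R (wvec [a, b, c]) = 0" for a b c
      using assms(1) by (simp add: CYBE_iff homog_single)
    ultimately show "jacobiator (bracket_of R) l m n (wvec x) (wvec y) (wvec z) = 0"
      by (simp add: jacobiator_bracket_of_words)
  qed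
  finally show ?thesis .
qed

lemma twisted_poisson_bracket_of:
  assumes "CYBE R"
  shows "twisted_poisson (bracket_of R)"
  unfolding twisted_poisson_def
  by (intro conjI allI impI bracket_of_add_left bracket_of_add_right bracket_of_smult_left
      bracket_of_smult_right bracket_of_homog bracket_of_skew bracket_of_leibniz
      bracket_of_jacobi[OF assms, unfolded jacobiator_def])

end

section \<open>Twisted Poisson structures are determined by r\<close>

lemma assoc_r_lin_ext:
  "assoc_r br p = lin_ext (\<lambda>w. if length w = 2 then br (wvec [w!0]) (wvec [w!1]) else 0) p"
  unfolding assoc_r_def lin_ext_def
  by (simp add: sum.inter_filter if_distrib[of "smult _"] cong: if_cong)

lemma proj2_lin_ext: "proj 2 p = lin_ext (\<lambda>w. if length w = 2 then wvec w else 0) p"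
  unfolding proj_def lin_ext_def
  by (simp add: sum.inter_filter if_distrib[of "smult _"] cong: if_cong)

lemma (in vv_endomorphism) assoc_r_bracket_of: "assoc_r (bracket_of R) = R"
proof
  fix p
  have "R p = R (proj 2 p)" using R_End by (simp add: EndVV_def)
  also have "\<dots> = lin_ext (\<lambda>w. if length w = 2 then R (wvec w) else 0) p"
    unfolding proj2_lin_ext
    by (simp add: tv_linear_lin_ext[OF R_linear] if_distrib[of R] tv_linear_zero[OF R_linear] cong: if_cong)
  also have "\<dots> = assoc_r (bracket_of R) p"
    unfolding assoc_r_lin_ext
    by (rule lin_ext_cong) (metis length2_cases bracket_of_wvec word_bracket_letters rpair_def)
  finally show "assoc_r (bracket_of R) p = R p" by simp
qed

locale twisted_poisson_bracket =
  fixes br :: "('b, 'k::field) tv \<Rightarrow> ('b, 'k) tv \<Rightarrow> ('b, 'k) tv"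
  assumes twisted: "twisted_poisson br"
begin

lemma br_linear_left: "tv_linear (\<lambda>p. br p q)"
  using twisted unfolding twisted_poisson_def tv_linear_def by simp

lemma br_linear_right: "tv_linear (br p)"
  using twisted unfolding twisted_poisson_def tv_linear_def by simp

lemma br_graded: "homog m p \<Longrightarrow> homog n q \<Longrightarrow> homog (m + n) (br p q)"
  using twisted unfolding twisted_poisson_def by blast

lemma br_skew: "homog m v \<Longrightarrow> homog n w \<Longrightarrow> br w v = - perm21 m n (br v w)"
  using twisted unfolding twisted_poisson_def by blast

lemma br_jacobi: "homog l u \<Longrightarrow> homog m v \<Longrightarrow> homog n w \<Longrightarrow> jacobiator br l m n u v w = 0"
  using twisted unfolding twisted_poisson_def jacobiator_def by blast

lemma br_leibniz: "homog l u \<Longrightarrow> homog m v \<Longrightarrow> homog n w \<Longrightarrow>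
    br (tensor u v) w = tensor u (br v w) + perm213 m l n (tensor v (br u w))"
  using twisted unfolding twisted_poisson_def by blast

lemma assoc_r_EndVV: "assoc_r br \<in> EndVV"
  unfolding EndVV_def
proof (intro CollectI conjI allI)
  fix p q :: "('b, 'k) tv" and c :: 'k
  show "assoc_r br (p + q) = assoc_r br p + assoc_r br q"
    by (simp add: assoc_r_lin_ext)
  show "assoc_r br (smult c p) = smult c (assoc_r br p)"
    by (simp add: assoc_r_lin_ext)
  show "assoc_r br p = assoc_r br (proj 2 p)"
    unfolding assoc_r_lin_ext proj2_lin_ext lin_ext_lin_ext by (rule lin_ext_cong) simp
  have "homog (1 + 1) (br (wvec [a]) (wvec [b]))" for a b
    by (intro br_graded homog_single) simp_all
  then show "homog 2 (assoc_r br p)"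
    unfolding assoc_r_lin_ext by (intro homog_lin_ext) (simp add: numeral_2_eq_2)
qed

lemma assoc_r_skew: "skew_r (assoc_r br)"
  unfolding skew_r_def
proof
  fix p
  let ?F = "\<lambda>w. if length w = 2 then br (wvec [w!0]) (wvec [w!1]) else 0"
  have "- r21 (assoc_r br) p = lin_ext (\<lambda>w. - flipP (?F (key21 1 1 w))) p"
    unfolding r21_def assoc_r_lin_ext flipP_def
    by (simp only: perm21_def lin_ext_map_key_involution[OF key21_involution]
        tv_linear_lin_ext[OF tv_linear_perms(1)[unfolded perm21_def]] lin_ext_fun_neg)
  also have "\<dots> = lin_ext ?F p"
  proof (rule lin_ext_cong)
    fix w :: "'b list"
    show "- flipP (?F (key21 1 1 w)) = ?F w"
    proof (cases "length w = 2")
      case True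
      have "br (wvec [w!1]) (wvec [w!0]) = - perm21 1 1 (br (wvec [w!0]) (wvec [w!1]))"
        by (rule br_skew) (simp_all add: homog_single)
      then show ?thesis
        using True by (simp add: key21_1_1 flipP_def tv_linear_neg[OF tv_linear_perms(1)]
            perm21_involution del: One_nat_def)
    qed (simp add: key21_def flipP_def tv_linear_zero[OF tv_linear_perms(1)])
  qed
  finally show "assoc_r br p = - r21 (assoc_r br) p" by (simp add: assoc_r_lin_ext)
qed

sublocale skew_vv_endomorphism "assoc_r br"
  by unfold_locales (rule assoc_r_EndVV, rule assoc_r_skew)

lemma br_nil_left: "br (wvec []) q = 0"
proof -
  have h0: "homog 0 (wvec [] :: ('b, 'k) tv)" by (simp add: homog_single)
  have "br (wvec []) q = lin_ext (\<lambda>y. br (wvec []) (wvec y)) q"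
    by (rule lin_ext_expand[OF br_linear_right])
  also have "\<dots> = 0"
  proof (rule lin_ext_eq_0)
    fix y
    have "br (tensor (wvec []) (wvec [])) (wvec y) = tensor (wvec []) (br (wvec []) (wvec y))
        + perm213 0 0 (length y) (tensor (wvec []) (br (wvec []) (wvec y)))"
      by (rule br_leibniz[OF h0 h0 homog_single]) simp
    then show "br (wvec []) (wvec y) = 0"
      by (simp add: tensor_nil perm213_0_0)
  qed
  finally show ?thesis .
qed

lemma br_letters: "br (wvec [a]) (wvec [b]) = word_bracket (assoc_r br) [a] [b]"
  by (simp add: word_bracket_letters rpair_def assoc_r_lin_ext)

lemma br_word_letter: "br (wvec y) (wvec [a]) = word_bracket (assoc_r br) y [a]"
proof (induction y)
  case Nil
  then show ?case by (simp add: br_nil_left word_bracket_def)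
next
  case (Cons b y)
  have "br (wvec (b # y)) (wvec [a]) = tensor (wvec [b]) (br (wvec y) (wvec [a]))
      + perm213 (length y) 1 1 (tensor (wvec y) (br (wvec [b]) (wvec [a])))"
    using br_leibniz[of 1 "wvec [b]" "length y" "wvec y" 1 "wvec [a]"]
    by (simp add: homog_single tensor_wvec_wvec)
  also have "\<dots> = word_bracket (assoc_r br) ([b] @ y) [a]"
    by (simp only: Cons.IH br_letters word_bracket_append_left) simp
  finally show ?case by simp
qed

lemma br_letter_word: "br (wvec [a]) (wvec y) = word_bracket (assoc_r br) [a] y"
proof -
  have "br (wvec [a]) (wvec y) = - perm21 (length y) 1 (br (wvec y) (wvec [a]))"
    by (rule br_skew) (simp_all add: homog_single)
  then show ?thesis
    using word_bracket_skew[of "[a]" y] by (simp add: br_word_letter)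
qed

lemma br_words: "br (wvec x) (wvec y) = word_bracket (assoc_r br) x y"
proof (induction x)
  case Nil
  then show ?case by (simp add: br_nil_left word_bracket_def)
next
  case (Cons b x)
  have "br (wvec (b # x)) (wvec y) = tensor (wvec [b]) (br (wvec x) (wvec y))
      + perm213 (length x) 1 (length y) (tensor (wvec x) (br (wvec [b]) (wvec y)))"
    using br_leibniz[of 1 "wvec [b]" "length x" "wvec x" "length y" "wvec y"]
    by (simp add: homog_single tensor_wvec_wvec)
  also have "\<dots> = word_bracket (assoc_r br) ([b] @ x) y"
    by (simp only: Cons.IH br_letter_word word_bracket_append_left) simp
  finally show ?case by simp
qed

lemma bracket_of_assoc_r: "bracket_of (assoc_r br) = br"
proof (intro ext)
  fix p q
  have "br p q = lin_ext (\<lambda>x. lin_ext (\<lambda>y. br (wvec x) (wvec y)) q) p"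
    by (subst lin_ext_expand[OF br_linear_left], subst lin_ext_expand[OF br_linear_right]) (rule refl)
  then show "bracket_of (assoc_r br) p q = br p q"
    by (simp add: bracket_of_def br_words)
qed

lemma assoc_r_CYBE: "CYBE (assoc_r br)"
  unfolding CYBE_iff
proof (intro allI impI)
  fix X :: "('b, 'k) tv" assume X: "homog 3 X"
  have letters: "cybe_lhs (assoc_r br) (wvec [a, b, c]) = 0" for a b c
  proof -
    have h1: "homog 1 (wvec [d] :: ('b, 'k) tv)" for d by (simp add: homog_single)
    have "jacobiator (bracket_of (assoc_r br)) 1 1 1 (wvec [a]) (wvec [b]) (wvec [c]) = 0"
      using br_jacobi[OF h1 h1 h1] by (simp add: bracket_of_assoc_r)
    then have "lin_ext (\<lambda>t. wvec [t!0, t!1, t!2]) (cybe_lhs (assoc_r br) (wvec [a, b, c])) = 0"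
      using jacobiator_bracket_of_words[of "[a]" "[b]" "[c]"] by simp
    then show ?thesis
      using lin_ext_homog3[OF homog_cybe_lhs, of wvec] by simp
  qed
  have "cybe_lhs (assoc_r br) X = lin_ext (\<lambda>w. cybe_lhs (assoc_r br) (wvec w)) X"
    by (rule lin_ext_expand[OF tv_linear_cybe_lhs])
  also have "\<dots> = 0"
    by (rule lin_ext_eq_0) (metis X homog_keys length3_cases letters)
  finally show "cybe_lhs (assoc_r br) X = 0" .
qed

end

theorem theorem1p1:
  fixes dummy :: "'b itself" and dummyk :: "'k::field_char_0 itself"
  shows "bij_betw (assoc_r :: (('b, 'k) tv \<Rightarrow> ('b, 'k) tv \<Rightarrow> ('b, 'k) tv) \<Rightarrow> _)
           {br. twisted_poisson br}
           {R. R \<in> EndVV \<and> skew_r R \<and> CYBE R}"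
proof (rule bij_betw_byWitness[where f' = bracket_of])
  show "\<forall>br\<in>{br. twisted_poisson br}. bracket_of (assoc_r br) = br"
    using twisted_poisson_bracket.bracket_of_assoc_r twisted_poisson_bracket.intro by blast
  show "\<forall>R\<in>{R. R \<in> EndVV \<and> skew_r R \<and> CYBE R}. assoc_r (bracket_of R) = R"
    using vv_endomorphism.assoc_r_bracket_of vv_endomorphism.intro by blast
  show "assoc_r ` {br. twisted_poisson br} \<subseteq> {R. R \<in> EndVV \<and> skew_r R \<and> CYBE R}"
    using twisted_poisson_bracket.assoc_r_EndVV twisted_poisson_bracket.assoc_r_skew
      twisted_poisson_bracket.assoc_r_CYBE twisted_poisson_bracket.intro by blast
  show "bracket_of ` {R. R \<in> EndVV \<and> skew_r R \<and> CYBE R} \<subseteq> {br. twisted_poisson br}"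
    using skew_vv_endomorphism.twisted_poisson_bracket_of skew_vv_endomorphism.intro
      skew_vv_endomorphism_axioms.intro vv_endomorphism.intro by blast
qed

end
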